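(* If expressions $e_1$ and $e_2$ are compatible and $[\![C_1]\!]$ and $[\![C_2]\!]$ are total functions, then $[\![(\mathsf{assume}\ e_1;C_1)+(\mathsf{assume}\ e_2;C_2)]\!]$ is a total function.
   Context: $\mathcal A=\langle U,+,\cdot,\mathbf 0,\mathbf 1\rangle$ is a partial semiring ($+$ commutative, associative, possibly partial, unit $\mathbf 0$; $\cdot$ total, associative, unit $\mathbf 1$; two-sided distributivity; $\mathbf 0$ annihilates), naturally ordered ($u\le v$ iff $\exists w.\,u+w=v$ is a partial order), Scott continuous, with a top element. Infinite sums are suprema of finite partial sums. $\mathcal W(\Sigma)$: maps $m:\Sigma\to U$ with countable support and defined mass, with pointwise operations. $\eta(\sigma)(\tau)=\mathbf 1$ if $\sigma=\tau$ else $\mathbf 0$; $f^\dagger(m)(\tau)=\sum_{\sigma\in\mathrm{supp}(m)}m(\sigma)\cdot f(\sigma)(\tau)$. Program semantics $[\![C]\!]:\Sigma\to\mathcal W(\Sigma)$ (possibly partial): $[\![C_1;C_2]\!](\sigma)=[\![C_2]\!]^\dagger([\![C_1]\!](\sigma))$, $[\![C_1+C_2]\!](\sigma)=[\![C_1]\!](\sigma)+[\![C_2]\!](\sigma)$, $[\![\mathsf{assume}\ e]\!](\sigma)=[\![e]\!](\sigma)\cdot\eta(\sigma)$. An expression $e$ is a test $b$ (Boolean combination of $\mathsf{true},\mathsf{false}$ and primitive tests $t\subseteq\Sigma$, with $[\![b]\!](\sigma)\in\{\mathbf 0,\mathbf 1\}$, $[\![t]\!](\sigma)=\mathbf 1$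 iff $\sigma\in t$) or a weight $u\in U$ with $[\![u]\!](\sigma)=u$. Expressions $e_1,e_2$ are compatible if $[\![e_1]\!](\sigma)+[\![e_2]\!](\sigma)$ is defined for every $\sigma\in\Sigma$. *)

theory Defs
  imports Main "HOL-Library.Countable_Set"
begin

record 'u psr =
  pplus  :: "'u \<Rightarrow> 'u \<Rightarrow> 'u option"
  ptimes :: "'u \<Rightarrow> 'u \<Rightarrow> 'u"
  pzero  :: 'u
  pone   :: 'u

definition nle :: "'u psr \<Rightarrow> 'u \<Rightarrow> 'u \<Rightarrow> bool" where
  "nle A u v \<longleftrightarrow> (\<exists>w. pplus A u w = Some v)"

definition is_lub :: "'u psr \<Rightarrow> 'u set \<Rightarrow> 'u \<Rightarrow> bool" where
  "is_lub A S x \<longleftrightarrow> (\<forall>s\<in>S. nle A s x) \<and> (\<forall>y. (\<forall>s\<in>S. nle A s y) \<longrightarrow> nle A x y)"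

definition directed :: "'u psr \<Rightarrow> 'u set \<Rightarrow> bool" where
  "directed A D \<longleftrightarrow> D \<noteq> {} \<and> (\<forall>a\<in>D. \<forall>b\<in>D. \<exists>c\<in>D. nle A a c \<and> nle A b c)"

definition partial_semiring :: "'u psr \<Rightarrow> bool" where
  "partial_semiring A \<longleftrightarrow>
     \<comment> \<open>addition: commutative, (partially) associative, unit 0\<close>
     (\<forall>a b. pplus A a b = pplus A b a) \<and>
     (\<forall>a b c. Option.bind (pplus A a b) (\<lambda>x. pplus A x c)
            = Option.bind (pplus A b c) (\<lambda>y. pplus A a y)) \<and>
     (\<forall>a. pplus A a (pzero A) = Some a) \<and>
     \<comment> \<open>multiplication: total, associative, unit 1\<close>
     (\<forall>a b c. ptimes A (ptimes A a b) c = ptimes A a (ptimes A b c)) \<and>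
     (\<forall>a. ptimes A (pone A) a = a \<and> ptimes A a (pone A) = a) \<and>
     \<comment> \<open>two-sided distributivity (whenever b + c is defined)\<close>
     (\<forall>a b c d. pplus A b c = Some d \<longrightarrow>
          pplus A (ptimes A a b) (ptimes A a c) = Some (ptimes A a d) \<and>
          pplus A (ptimes A b a) (ptimes A c a) = Some (ptimes A d a)) \<and>
     \<comment> \<open>0 annihilates\<close>
     (\<forall>a. ptimes A (pzero A) a = pzero A \<and> ptimes A a (pzero A) = pzero A)"

definition good_semiring :: "'u psr \<Rightarrow> bool" where
  "good_semiring A \<longleftrightarrow>
     partial_semiring A \<and>
     \<comment> \<open>natural order is a partial order\<close>
     (\<forall>u. nle A u u) \<and>
     (\<forall>u v w. nle A u v \<longrightarrow> nle A v w \<longrightarrow> nle A u w) \<and>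
     (\<forall>u v. nle A u v \<longrightarrow> nle A v u \<longrightarrow> u = v) \<and>
     \<comment> \<open>Scott continuity: directed suprema exist and the operations preserve them\<close>
     (\<forall>D. directed A D \<longrightarrow> (\<exists>x. is_lub A D x)) \<and>
     (\<forall>D d u v. directed A D \<longrightarrow> is_lub A D d \<longrightarrow> pplus A d u = Some v \<longrightarrow>
          is_lub A {w. \<exists>s\<in>D. pplus A s u = Some w} v) \<and>
     (\<forall>D d u. directed A D \<longrightarrow> is_lub A D d \<longrightarrow>
          is_lub A (ptimes A u ` D) (ptimes A u d) \<and>
          is_lub A ((\<lambda>s. ptimes A s u) ` D) (ptimes A d u)) \<and>
     \<comment> \<open>top element\<close>
     (\<exists>t. \<forall>u. nle A u t)"

inductive fsum_rel :: "'u psr \<Rightarrow> ('a \<Rightarrow> 'u) \<Rightarrow> 'a set \<Rightarrow> 'u \<Rightarrow> bool"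
  for A :: "'u psr" and f :: "'a \<Rightarrow> 'u" where
  fsum_empty: "fsum_rel A f {} (pzero A)"
| fsum_insert: "fsum_rel A f F v \<Longrightarrow> x \<notin> F \<Longrightarrow> pplus A v (f x) = Some w
      \<Longrightarrow> fsum_rel A f (insert x F) w"

definition fsum :: "'u psr \<Rightarrow> ('a \<Rightarrow> 'u) \<Rightarrow> 'a set \<Rightarrow> 'u option" where
  "fsum A f F = (if \<exists>v. fsum_rel A f F v then Some (THE v. fsum_rel A f F v) else None)"

definition isum :: "'u psr \<Rightarrow> ('a \<Rightarrow> 'u) \<Rightarrow> 'a set \<Rightarrow> 'u option" where
  "isum A f S = (if \<forall>F. finite F \<and> F \<subseteq> S \<longrightarrow> fsum A f F \<noteq> None
     then Some (THE v. is_lub A {the (fsum A f F) | F. finite F \<and> F \<subseteq> S} v)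
     else None)"

definition supp :: "'u psr \<Rightarrow> ('s \<Rightarrow> 'u) \<Rightarrow> 's set" where
  "supp A m = {\<sigma>. m \<sigma> \<noteq> pzero A}"

definition weighting :: "'u psr \<Rightarrow> ('s \<Rightarrow> 'u) \<Rightarrow> bool" where
  "weighting A m \<longleftrightarrow> countable (supp A m) \<and> isum A m (supp A m) \<noteq> None"

definition eta :: "'u psr \<Rightarrow> 's \<Rightarrow> 's \<Rightarrow> 'u" where
  "eta A \<sigma> = (\<lambda>\<tau>. if \<sigma> = \<tau> then pone A else pzero A)"

definition scale :: "'u psr \<Rightarrow> 'u \<Rightarrow> ('s \<Rightarrow> 'u) \<Rightarrow> 's \<Rightarrow> 'u" where
  "scale A u m = (\<lambda>\<tau>. ptimes A u (m \<tau>))"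

definition wplus :: "'u psr \<Rightarrow> ('s \<Rightarrow> 'u) \<Rightarrow> ('s \<Rightarrow> 'u) \<Rightarrow> ('s \<Rightarrow> 'u) option" where
  "wplus A m1 m2 =
     (if (\<forall>\<tau>. pplus A (m1 \<tau>) (m2 \<tau>) \<noteq> None)
          \<and> weighting A (\<lambda>\<tau>. the (pplus A (m1 \<tau>) (m2 \<tau>)))
      then Some (\<lambda>\<tau>. the (pplus A (m1 \<tau>) (m2 \<tau>))) else None)"

definition kext :: "'u psr \<Rightarrow> ('s \<Rightarrow> ('s \<Rightarrow> 'u) option) \<Rightarrow> ('s \<Rightarrow> 'u) \<Rightarrow> ('s \<Rightarrow> 'u) option" where
  "kext A f m =
     (let g = (\<lambda>\<tau>. isum A (\<lambda>\<sigma>. ptimes A (m \<sigma>) (the (f \<sigma>) \<tau>)) (supp A m)) in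
      if (\<forall>\<sigma>\<in>supp A m. f \<sigma> \<noteq> None) \<and> (\<forall>\<tau>. g \<tau> \<noteq> None)
         \<and> weighting A (\<lambda>\<tau>. the (g \<tau>))
      then Some (\<lambda>\<tau>. the (g \<tau>)) else None)"

datatype 's bexp = BTrue | BFalse | BPrim "'s set" | BNot "'s bexp"
  | BAnd "'s bexp" "'s bexp" | BOr "'s bexp" "'s bexp"

fun bval :: "'s bexp \<Rightarrow> 's \<Rightarrow> bool" where
  "bval BTrue \<sigma> = True"
| "bval BFalse \<sigma> = False"
| "bval (BPrim t) \<sigma> = (\<sigma> \<in> t)"
| "bval (BNot b) \<sigma> = (\<not> bval b \<sigma>)"
| "bval (BAnd b1 b2) \<sigma> = (bval b1 \<sigma> \<and> bval b2 \<sigma>)"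
| "bval (BOr b1 b2) \<sigma> = (bval b1 \<sigma> \<or> bval b2 \<sigma>)"

datatype ('s, 'u) expr = Test "'s bexp" | Weight 'u

fun eval :: "'u psr \<Rightarrow> ('s, 'u) expr \<Rightarrow> 's \<Rightarrow> 'u" where
  "eval A (Test b) \<sigma> = (if bval b \<sigma> then pone A else pzero A)"
| "eval A (Weight u) \<sigma> = u"

definition compatible :: "'u psr \<Rightarrow> ('s, 'u) expr \<Rightarrow> ('s, 'u) expr \<Rightarrow> bool" where
  "compatible A e1 e2 \<longleftrightarrow> (\<forall>\<sigma>. pplus A (eval A e1 \<sigma>) (eval A e2 \<sigma>) \<noteq> None)"

type_synonym ('s, 'u) den = "'s \<Rightarrow> ('s \<Rightarrow> 'u) option"

definition sem_seq :: "'u psr \<Rightarrow> ('s, 'u) den \<Rightarrow> ('s, 'u) den \<Rightarrow> ('s, 'u) den" where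
  "sem_seq A c1 c2 = (\<lambda>\<sigma>. Option.bind (c1 \<sigma>) (kext A c2))"

definition sem_plus :: "'u psr \<Rightarrow> ('s, 'u) den \<Rightarrow> ('s, 'u) den \<Rightarrow> ('s, 'u) den" where
  "sem_plus A c1 c2 = (\<lambda>\<sigma>. Option.bind (c1 \<sigma>) (\<lambda>m1. Option.bind (c2 \<sigma>) (\<lambda>m2. wplus A m1 m2)))"

definition sem_assume :: "'u psr \<Rightarrow> ('s, 'u) expr \<Rightarrow> ('s, 'u) den" where
  "sem_assume A e = (\<lambda>\<sigma>. Some (scale A (eval A e \<sigma>) (eta A \<sigma>)))"

definition wf_den :: "'u psr \<Rightarrow> ('s, 'u) den \<Rightarrow> bool" where
  "wf_den A c \<longleftrightarrow> (\<forall>\<sigma> m. c \<sigma> = Some m \<longrightarrow> weighting A m)"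

definition total_den :: "('s, 'u) den \<Rightarrow> bool" where
  "total_den c \<longleftrightarrow> (\<forall>\<sigma>. c \<sigma> \<noteq> None)"

end

theory Submission
  imports Defs
begin

text \<open>Since every element lies below the top element \<open>\<top>\<close>, and definedness of \<open>+\<close> is
inherited downwards along the natural order, \<open>u\<^sub>1 a + u\<^sub>2 b\<close> is defined whenever
\<open>u\<^sub>1 + u\<^sub>2\<close> is: it lies below \<open>(u\<^sub>1 + u\<^sub>2) \<top>\<close>. Applied to all finite partial sums, this
shows that \<open>u\<^sub>1 m\<^sub>1 + u\<^sub>2 m\<^sub>2\<close> is again a weighting. Moreover \<open>assume e; C\<close> sends \<open>\<sigma>\<close> to
\<open>[[e]](\<sigma>) \<cdot> [[C]](\<sigma>)\<close>, because the Kleisli extension of a scaled point mass is a sum over at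
most one state.\<close>

lemma the_lub_eq:
  assumes antisym: "\<And>u v. nle A u v \<Longrightarrow> nle A v u \<Longrightarrow> u = v" and lub: "is_lub A S x"
  shows "(THE v. is_lub A S v) = x"
proof (rule the_equality)
  fix y
  assume "is_lub A S y"
  then show "y = x"
    using lub antisym unfolding is_lub_def by blast
qed (fact lub)

lemma fsum_rel_empty_setD: "fsum_rel A f {} v \<Longrightarrow> v = pzero A"
  by (cases rule: fsum_rel.cases) auto

lemma fsum_rel_empty_set_iff: "fsum_rel A f {} v \<longleftrightarrow> v = pzero A"
  using fsum_rel.fsum_empty[of A f] fsum_rel_empty_setD[of A f v] by blast

lemma fsum_empty_set: "fsum A f {} = Some (pzero A)"
  unfolding fsum_def fsum_rel_empty_set_iff by simp

lemma weighting_intro: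
  "countable (supp A m) \<Longrightarrow> (\<And>F. finite F \<Longrightarrow> F \<subseteq> supp A m \<Longrightarrow> \<exists>v. fsum_rel A m F v)
    \<Longrightarrow> weighting A m"
  unfolding weighting_def isum_def fsum_def by auto

context
  fixes A :: "'u psr"
  assumes psr: "partial_semiring A"
begin

lemma psr_add_commute: "pplus A a b = pplus A b a"
  using psr unfolding partial_semiring_def by blast

lemma psr_add_zero_right: "pplus A a (pzero A) = Some a"
  using psr unfolding partial_semiring_def by blast

lemma psr_add_zero_left: "pplus A (pzero A) a = Some a"
  using psr_add_commute psr_add_zero_right by metis

lemma psr_add_assoc:
  "Option.bind (pplus A a b) (\<lambda>x. pplus A x c) = Option.bind (pplus A b c) (pplus A a)"
  using psr unfolding partial_semiring_def by blast

lemma psr_distrib_left: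
  "pplus A b c = Some d \<Longrightarrow> pplus A (ptimes A a b) (ptimes A a c) = Some (ptimes A a d)"
  using psr unfolding partial_semiring_def by blast

lemma psr_distrib_right:
  "pplus A b c = Some d \<Longrightarrow> pplus A (ptimes A b a) (ptimes A c a) = Some (ptimes A d a)"
  using psr unfolding partial_semiring_def by blast

lemma psr_mult_zero_left: "ptimes A (pzero A) a = pzero A"
  using psr unfolding partial_semiring_def by blast

lemma psr_mult_zero_right: "ptimes A a (pzero A) = pzero A"
  using psr unfolding partial_semiring_def by blast

lemma psr_mult_one_right: "ptimes A a (pone A) = a"
  using psr unfolding partial_semiring_def by blast

lemma psr_add_assoc_rightD:
  "pplus A a b = Some x \<Longrightarrow> pplus A x c = Some y \<Longrightarrow> \<exists>z. pplus A b c = Some z \<and> pplus A a z = Some y"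
  using psr_add_assoc[of a b c] by (cases "pplus A b c") auto

lemma psr_add_assoc_leftD:
  "pplus A b c = Some z \<Longrightarrow> pplus A a z = Some y \<Longrightarrow> \<exists>x. pplus A a b = Some x \<and> pplus A x c = Some y"
  using psr_add_assoc[of a b c] by (cases "pplus A a b") auto

lemma psr_add_rearrange:
  assumes "pplus A a b = Some p" "pplus A c d = Some q" "pplus A p q = Some w"
  shows "\<exists>r s. pplus A a c = Some r \<and> pplus A b d = Some s \<and> pplus A r s = Some w"
proof -
  obtain z where z: "pplus A b q = Some z" "pplus A a z = Some w"
    using psr_add_assoc_rightD assms(1,3) by blast
  obtain y where y: "pplus A c y = Some z" "pplus A d b = Some y"
    using psr_add_assoc_rightD[OF assms(2)] z(1) psr_add_commute by metis
  obtain r where "pplus A a c = Some r" "pplus A r y = Some w"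
    using psr_add_assoc_leftD[OF y(1) z(2)] by blast
  with y(2) show ?thesis
    using psr_add_commute by metis
qed

lemma nle_refl: "nle A u u"
  unfolding nle_def using psr_add_zero_right by blast

lemma nle_zero: "nle A (pzero A) u"
  unfolding nle_def using psr_add_zero_left by blast

lemma nle_mult_left: "nle A a b \<Longrightarrow> nle A (ptimes A u a) (ptimes A u b)"
  unfolding nle_def using psr_distrib_left by blast

lemma pplus_defined_downclosed:
  assumes "nle A x x'" "nle A y y'" "pplus A x' y' = Some s"
  shows "pplus A x y \<noteq> None"
  using assms psr_add_rearrange unfolding nle_def by fastforce

lemma pplus_mult_defined:
  assumes top: "\<And>u. nle A u t" and "pplus A u\<^sub>1 u\<^sub>2 = Some d"
  shows "pplus A (ptimes A u\<^sub>1 a) (ptimes A u\<^sub>2 b) \<noteq> None"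
  using pplus_defined_downclosed[OF nle_mult_left nle_mult_left psr_distrib_right] top assms(2) by blast

lemma fsum_rel_removeD:
  "fsum_rel A f G w \<Longrightarrow> x \<in> G \<Longrightarrow> \<exists>v. fsum_rel A f (G - {x}) v \<and> pplus A v (f x) = Some w"
proof (induction arbitrary: x rule: fsum_rel.induct)
  case fsum_empty
  then show ?case by simp
next
  case (fsum_insert F v y w)
  show ?case
  proof (cases "y = x")
    case True
    then show ?thesis using fsum_insert by auto
  next
    case False
    then obtain v' where v': "fsum_rel A f (F - {x}) v'" "pplus A v' (f x) = Some v"
      using fsum_insert by auto
    obtain z where z: "pplus A (f x) (f y) = Some z" "pplus A v' z = Some w"
      using psr_add_assoc_rightD[OF v'(2) fsum_insert.hyps(3)] by blast
    obtain t where t: "pplus A v' (f y) = Some t" "pplus A t (f x) = Some w"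
      using psr_add_assoc_leftD[OF _ z(2)] z(1) psr_add_commute by metis
    have "fsum_rel A f (insert y (F - {x})) t"
      using fsum_rel.fsum_insert[OF v'(1) _ t(1)] fsum_insert.hyps(2) by blast
    moreover have "insert y (F - {x}) = insert y F - {x}"
      using False by blast
    ultimately show ?thesis
      using t by auto
  qed
qed

lemma fsum_rel_singleton_iff: "fsum_rel A f {x} v \<longleftrightarrow> v = f x"
proof
  assume "fsum_rel A f {x} v"
  then obtain v' where "fsum_rel A f {} v'" "pplus A v' (f x) = Some v"
    using fsum_rel_removeD by fastforce
  then show "v = f x"
    using fsum_rel_empty_setD[of A f v'] psr_add_zero_left[of "f x"] by simp
next
  assume "v = f x"
  then show "fsum_rel A f {x} v"
    using fsum_rel.fsum_insert[of A f "{}" "pzero A" x "f x"] fsum_rel.fsum_empty psr_add_zero_left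
    by blast
qed

lemma fsum_singleton: "fsum A f {x} = Some (f x)"
  unfolding fsum_def fsum_rel_singleton_iff by simp

lemma fsum_rel_extend_outside_supp:
  "finite F \<Longrightarrow> fsum_rel A f (F \<inter> supp A f) v \<Longrightarrow> fsum_rel A f F v"
proof (induction F arbitrary: v rule: finite_induct)
  case empty
  then show ?case by simp
next
  case (insert x F)
  show ?case
  proof (cases "x \<in> supp A f")
    case True
    then have "x \<in> insert x F \<inter> supp A f" "insert x F \<inter> supp A f - {x} = F \<inter> supp A f"
      using insert.hyps by auto
    then obtain v' where "fsum_rel A f (F \<inter> supp A f) v'" "pplus A v' (f x) = Some v"
      using fsum_rel_removeD[OF insert.prems] by metis
    then show ?thesis
      using insert.IH fsum_rel.fsum_insert[of A f F v' x v] insert.hyps(2) by blast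
  next
    case False
    then have "insert x F \<inter> supp A f = F \<inter> supp A f" and "f x = pzero A"
      unfolding supp_def by auto
    then have "fsum_rel A f F v" and "pplus A v (f x) = Some v"
      using insert.IH insert.prems psr_add_zero_right by simp_all
    then show ?thesis
      using fsum_rel.fsum_insert[of A f F v x v] insert.hyps(2) by blast
  qed
qed

lemma weighting_fsum_rel_exists:
  assumes "weighting A m" "finite F"
  shows "\<exists>v. fsum_rel A m F v"
proof -
  have "fsum A m (F \<inter> supp A m) \<noteq> None"
    using assms unfolding weighting_def isum_def by (auto split: if_splits)
  then obtain v where "fsum_rel A m (F \<inter> supp A m) v"
    unfolding fsum_def by (auto split: if_splits)
  then show ?thesis
    using fsum_rel_extend_outside_supp \<open>finite F\<close> by blast
qed

lemma fsum_rel_scale: "fsum_rel A m F v \<Longrightarrow> fsum_rel A (scale A u m) F (ptimes A u v)"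
proof (induction rule: fsum_rel.induct)
  case fsum_empty
  then show ?case
    using psr_mult_zero_right fsum_rel.fsum_empty by metis
next
  case (fsum_insert F v x w)
  have "pplus A (ptimes A u v) (scale A u m x) = Some (ptimes A u w)"
    using psr_distrib_left[OF fsum_insert.hyps(3)] by (simp add: scale_def)
  then show ?case
    using fsum_rel.fsum_insert[OF fsum_insert.IH fsum_insert.hyps(2)] by blast
qed

lemma weighting_scale:
  assumes "weighting A m"
  shows "weighting A (scale A u m)"
proof (rule weighting_intro)
  have "supp A (scale A u m) \<subseteq> supp A m"
    unfolding supp_def scale_def using psr_mult_zero_right by auto
  then show "countable (supp A (scale A u m))"
    using assms countable_subset unfolding weighting_def by blast
next
  fix F
  assume "finite F" "F \<subseteq> supp A (scale A u m)"
  then show "\<exists>v. fsum_rel A (scale A u m) F v"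
    using weighting_fsum_rel_exists[OF assms] fsum_rel_scale by blast
qed

lemma fsum_rel_add:
  "fsum_rel A f F v \<Longrightarrow> fsum_rel A g F w \<Longrightarrow> pplus A v w = Some s
    \<Longrightarrow> fsum_rel A (\<lambda>x. the (pplus A (f x) (g x))) F s"
proof (induction arbitrary: w s rule: fsum_rel.induct)
  case fsum_empty
  then show ?case
    using fsum_rel_empty_setD psr_add_zero_right fsum_rel.fsum_empty by fastforce
next
  case (fsum_insert F v x v')
  obtain w' where w': "fsum_rel A g F w'" "pplus A w' (g x) = Some w"
    using fsum_rel_removeD[OF fsum_insert.prems(1)] fsum_insert.hyps(2) by fastforce
  obtain r q where "pplus A v w' = Some r" "pplus A (f x) (g x) = Some q" "pplus A r q = Some s"
    using psr_add_rearrange[OF fsum_insert.hyps(3) w'(2) fsum_insert.prems(2)] by blast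
  then show ?case
    using fsum_rel.fsum_insert fsum_insert.IH w'(1) fsum_insert.hyps(2) by fastforce
qed

lemma weighting_pointwise_add:
  assumes "countable (supp A m\<^sub>1)" "countable (supp A m\<^sub>2)"
    and sums_addable: "\<And>F. finite F \<Longrightarrow>
      \<exists>v\<^sub>1 v\<^sub>2 s. fsum_rel A m\<^sub>1 F v\<^sub>1 \<and> fsum_rel A m\<^sub>2 F v\<^sub>2 \<and> pplus A v\<^sub>1 v\<^sub>2 = Some s"
  shows "weighting A (\<lambda>\<tau>. the (pplus A (m\<^sub>1 \<tau>) (m\<^sub>2 \<tau>)))"
proof (rule weighting_intro)
  have "supp A (\<lambda>\<tau>. the (pplus A (m\<^sub>1 \<tau>) (m\<^sub>2 \<tau>))) \<subseteq> supp A m\<^sub>1 \<union> supp A m\<^sub>2"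
    unfolding supp_def using psr_add_zero_right by auto
  then show "countable (supp A (\<lambda>\<tau>. the (pplus A (m\<^sub>1 \<tau>) (m\<^sub>2 \<tau>))))"
    using assms(1,2) by (blast intro: countable_subset)
next
  fix F
  assume "finite F" "F \<subseteq> supp A (\<lambda>\<tau>. the (pplus A (m\<^sub>1 \<tau>) (m\<^sub>2 \<tau>)))"
  then obtain v\<^sub>1 v\<^sub>2 s where "fsum_rel A m\<^sub>1 F v\<^sub>1" "fsum_rel A m\<^sub>2 F v\<^sub>2" "pplus A v\<^sub>1 v\<^sub>2 = Some s"
    using sums_addable by blast
  then show "\<exists>v. fsum_rel A (\<lambda>\<tau>. the (pplus A (m\<^sub>1 \<tau>) (m\<^sub>2 \<tau>))) F v"
    using fsum_rel_add by blast
qed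

lemma wplus_scale_defined:
  assumes top: "\<And>u. nle A u t" and compatible: "pplus A u\<^sub>1 u\<^sub>2 = Some d"
    and w\<^sub>1: "weighting A m\<^sub>1" and w\<^sub>2: "weighting A m\<^sub>2"
  shows "wplus A (scale A u\<^sub>1 m\<^sub>1) (scale A u\<^sub>2 m\<^sub>2) \<noteq> None"
proof -
  have sums_addable: "\<exists>v\<^sub>1 v\<^sub>2 s. fsum_rel A (scale A u\<^sub>1 m\<^sub>1) F v\<^sub>1 \<and> fsum_rel A (scale A u\<^sub>2 m\<^sub>2) F v\<^sub>2
      \<and> pplus A v\<^sub>1 v\<^sub>2 = Some s" if "finite F" for F
  proof -
    obtain s\<^sub>1 s\<^sub>2 where "fsum_rel A m\<^sub>1 F s\<^sub>1" "fsum_rel A m\<^sub>2 F s\<^sub>2"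
      using weighting_fsum_rel_exists w\<^sub>1 w\<^sub>2 \<open>finite F\<close> by metis
    moreover obtain s where "pplus A (ptimes A u\<^sub>1 s\<^sub>1) (ptimes A u\<^sub>2 s\<^sub>2) = Some s"
      using pplus_mult_defined[OF top compatible] by blast
    ultimately show ?thesis
      using fsum_rel_scale by blast
  qed
  have "countable (supp A (scale A u\<^sub>1 m\<^sub>1))" "countable (supp A (scale A u\<^sub>2 m\<^sub>2))"
    using weighting_scale w\<^sub>1 w\<^sub>2 unfolding weighting_def by blast+
  from weighting_pointwise_add[OF this sums_addable]
  have "weighting A (\<lambda>\<tau>. the (pplus A (scale A u\<^sub>1 m\<^sub>1 \<tau>) (scale A u\<^sub>2 m\<^sub>2 \<tau>)))" .
  then show ?thesis
    unfolding wplus_def scale_def using pplus_mult_defined[OF top compatible] by auto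
qed

end

text \<open>Antisymmetry of the natural order is needed only because \<open>isum\<close> selects the supremum
with \<open>THE\<close>.\<close>

context
  fixes A :: "'u psr"
  assumes psr: "partial_semiring A"
    and nle_antisym: "\<And>u v. nle A u v \<Longrightarrow> nle A v u \<Longrightarrow> u = v"
begin

lemma isum_empty_set: "isum A f {} = Some (pzero A)"
proof -
  have partial_sums: "{the (fsum A f F) | F. finite F \<and> F \<subseteq> {}} = {pzero A}"
    by (simp add: fsum_empty_set)
  have "is_lub A {pzero A} (pzero A)"
    unfolding is_lub_def using nle_refl[OF psr] by auto
  then show ?thesis
    unfolding isum_def partial_sums by (simp add: fsum_empty_set the_lub_eq[OF nle_antisym])
qed

lemma isum_singleton: "isum A f {x} = Some (f x)"
proof -
  have "{the (fsum A f F) | F. finite F \<and> F \<subseteq> {x}} = (\<lambda>F. the (fsum A f F)) ` {{}, {x}}"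
    unfolding subset_singleton_iff by auto
  also have "\<dots> = {pzero A, f x}"
    by (simp add: fsum_empty_set fsum_singleton[OF psr])
  finally have partial_sums: "{the (fsum A f F) | F. finite F \<and> F \<subseteq> {x}} = {pzero A, f x}" .
  have defined: "\<forall>F. finite F \<and> F \<subseteq> {x} \<longrightarrow> fsum A f F \<noteq> None"
    unfolding subset_singleton_iff by (auto simp: fsum_empty_set fsum_singleton[OF psr])
  have "is_lub A {pzero A, f x} (f x)"
    unfolding is_lub_def using nle_refl[OF psr] nle_zero[OF psr] by auto
  then show ?thesis
    unfolding isum_def partial_sums using defined by (simp add: the_lub_eq[OF nle_antisym])
qed

lemma kext_scale_eta:
  assumes "C \<sigma> = Some m" "weighting A m"
  shows "kext A C (scale A u (eta A \<sigma>)) = Some (scale A u m)"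
proof -
  have point: "scale A u (eta A \<sigma>) = (\<lambda>\<tau>. if \<tau> = \<sigma> then u else pzero A)" (is "_ = ?point")
    by (auto simp: scale_def eta_def psr_mult_one_right[OF psr] psr_mult_zero_right[OF psr])
  have supp_point: "supp A ?point = (if u = pzero A then {} else {\<sigma>})"
    unfolding supp_def by auto
  have "isum A (\<lambda>\<sigma>'. ptimes A (?point \<sigma>') (the (C \<sigma>') \<tau>)) (supp A ?point) = Some (scale A u m \<tau>)"
    for \<tau>
    using assms(1)
    by (simp add: supp_point isum_empty_set isum_singleton scale_def psr_mult_zero_left[OF psr])
  moreover have "\<forall>\<sigma>'\<in>supp A ?point. C \<sigma>' \<noteq> None"
    unfolding supp_point using assms(1) by auto
  ultimately show ?thesis
    unfolding point kext_def Let_def using weighting_scale[OF psr assms(2)] by simp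
qed

lemma sem_seq_assume:
  "C \<sigma> = Some m \<Longrightarrow> weighting A m
    \<Longrightarrow> sem_seq A (sem_assume A e) C \<sigma> = Some (scale A (eval A e \<sigma>) m)"
  unfolding sem_seq_def sem_assume_def using kext_scale_eta by simp

end

theorem lemmaA8:
  fixes A :: "'u psr"
    and e1 e2 :: "('s, 'u) expr"
    and C1 C2 :: "('s, 'u) den"
  assumes "good_semiring A"
    and "compatible A e1 e2"
    and "wf_den A C1" and "wf_den A C2"
    and "total_den C1" and "total_den C2"
  shows "total_den (sem_plus A (sem_seq A (sem_assume A e1) C1)
                               (sem_seq A (sem_assume A e2) C2))"
  unfolding total_den_def
proof
  have psr: "partial_semiring A" and antisym: "\<And>u v. nle A u v \<Longrightarrow> nle A v u \<Longrightarrow> u = v"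
    and top: "\<exists>t. \<forall>u. nle A u t"
    using assms(1) unfolding good_semiring_def by blast+
  fix \<sigma>
  obtain m1 m2 where m: "C1 \<sigma> = Some m1" "C2 \<sigma> = Some m2"
    using assms(5,6) unfolding total_den_def by blast
  then have w: "weighting A m1" "weighting A m2"
    using assms(3,4) unfolding wf_den_def by blast+
  obtain d where "pplus A (eval A e1 \<sigma>) (eval A e2 \<sigma>) = Some d"
    using assms(2) unfolding compatible_def by blast
  then have "wplus A (scale A (eval A e1 \<sigma>) m1) (scale A (eval A e2 \<sigma>) m2) \<noteq> None"
    using wplus_scale_defined[OF psr] top w by blast
  then show "sem_plus A (sem_seq A (sem_assume A e1) C1) (sem_seq A (sem_assume A e2) C2) \<sigma> \<noteq> None"
    unfolding sem_plus_def by (simp add: sem_seq_assume[OF psr antisym] m w)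
qed

end
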